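(* Let $\mathcal{H}=(V,H,\bm{w})$ be a finite, connected, weighted undirected hypergraph in which every hyperedge has at least two vertices. Then for any two distinct vertices $u,v\in V$ and any hyperedge $h\in H$, the functions $\alpha\mapsto\kappa_\alpha(u,v)$ and $\alpha\mapsto\kappa_\alpha(h)$ are concave on $[0,1]$.
   Context: A weighted undirected hypergraph $\mathcal{H}=(V,H,\bm{w})$ has a finite vertex set $V$, a finite set $H$ of hyperedges (subsets of $V$), and positive weights $w_h>0$ for $h\in H$. Distinct vertices $u,v$ are adjacent ($u\sim v$) if some hyperedge contains both; $\Gamma(x)=\{z\in V: z\sim x\}$. The degree is $\mathrm{Deg}(x)=\sum_{h\ni x}w_h$. A hyperpath connecting $u$ and $v$ is a sequence of hyperedges $h_1,\dots,h_l$ with $u\in h_1$, $v\in h_l$, $h_j\cap h_{j+1}\neq\emptyset$ for $1\le j\le l-1$; $\mathcal{H}$ is connected if every two distinct vertices are connected by a hyperpath. For $u\neq v$, $d(u,v)=\inf_\gamma\sum_{h\in\gamma}w_h$ over hyperpaths $\gamma$ connecting $u,v$, and $d(u,u)=0$. For a hyperedge $h=\{x_1,\dots,x_k\}$, $L(h)=\min_{1\le i<j\le k}d(x_i,x_j)$. For probability measures $\mu,\nu$ on $V$, $W(\mu,\nu)=\inf_\pi\sum_{x,y\in V}\pi(x,y)d(x,y)$, the infimum over couplings $\pi$ of $\mu,\nu$ (probability measures on $V\times V$ with marginals $\mu$ and $\nu$). For $\alpha\in[0,1]$ and $x\in V$, the measure $\mu_x^\alpha$ is: $\mu_x^\alpha(x)=\alpha$;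 $\mu_x^\alpha(z)=(1-\alpha)\sum_{h'\in H:\,x,z\in h'}\frac{1}{|h'|-1}\frac{w_{h'}}{\mathrm{Deg}(x)}$ for $z\in\Gamma(x)$; and $0$ otherwise. For distinct $u,v$, $\kappa_\alpha(u,v)=1-\frac{W(\mu_u^\alpha,\mu_v^\alpha)}{d(u,v)}$. For $h=\{x_1,\dots,x_k\}$, $W_\alpha(h)=\sum_{1\le i<j\le k}W(\mu_{x_i}^\alpha,\mu_{x_j}^\alpha)$ and $\kappa_\alpha(h)=1-\frac{W_\alpha(h)}{L(h)}$. *)

theory Defs
  imports "HOL-Analysis.Analysis"
begin

definition adjacent :: "'a set set \<Rightarrow> 'a \<Rightarrow> 'a \<Rightarrow> bool" where
  "adjacent H u v \<longleftrightarrow> u \<noteq> v \<and> (\<exists>h\<in>H. u \<in> h \<and> v \<in> h)"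

definition nbhd :: "'a set \<Rightarrow> 'a set set \<Rightarrow> 'a \<Rightarrow> 'a set" where
  "nbhd V H x = {z \<in> V. adjacent H z x}"

definition Deg :: "'a set set \<Rightarrow> ('a set \<Rightarrow> real) \<Rightarrow> 'a \<Rightarrow> real" where
  "Deg H w x = (\<Sum>h\<in>{h\<in>H. x \<in> h}. w h)"

definition hyperpath :: "'a set set \<Rightarrow> 'a \<Rightarrow> 'a \<Rightarrow> 'a set list \<Rightarrow> bool" where
  "hyperpath H u v p \<longleftrightarrow> p \<noteq> [] \<and> set p \<subseteq> H \<and> u \<in> hd p \<and> v \<in> last p \<and>
     (\<forall>j. Suc j < length p \<longrightarrow> p ! j \<inter> p ! Suc j \<noteq> {})"

definition hg_connected :: "'a set \<Rightarrow> 'a set set \<Rightarrow> bool" where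
  "hg_connected V H \<longleftrightarrow> (\<forall>u\<in>V. \<forall>v\<in>V. u \<noteq> v \<longrightarrow> (\<exists>p. hyperpath H u v p))"

definition hdist :: "'a set set \<Rightarrow> ('a set \<Rightarrow> real) \<Rightarrow> 'a \<Rightarrow> 'a \<Rightarrow> real" where
  "hdist H w u v = (if u = v then 0
     else Inf {sum_list (map w p) | p. hyperpath H u v p})"

definition Lh :: "'a set set \<Rightarrow> ('a set \<Rightarrow> real) \<Rightarrow> 'a set \<Rightarrow> real" where
  "Lh H w h = Min {hdist H w x y | x y. x \<in> h \<and> y \<in> h \<and> x \<noteq> y}"

definition coupling :: "'a set \<Rightarrow> ('a \<Rightarrow> real) \<Rightarrow> ('a \<Rightarrow> real) \<Rightarrow> ('a \<Rightarrow> 'a \<Rightarrow> real) \<Rightarrow> bool" where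
  "coupling V \<mu> \<nu> \<pi> \<longleftrightarrow> (\<forall>x\<in>V. \<forall>y\<in>V. \<pi> x y \<ge> 0)
     \<and> (\<forall>x\<in>V. (\<Sum>y\<in>V. \<pi> x y) = \<mu> x) \<and> (\<forall>y\<in>V. (\<Sum>x\<in>V. \<pi> x y) = \<nu> y)"

definition Wass :: "'a set \<Rightarrow> 'a set set \<Rightarrow> ('a set \<Rightarrow> real) \<Rightarrow> ('a \<Rightarrow> real) \<Rightarrow> ('a \<Rightarrow> real) \<Rightarrow> real" where
  "Wass V H w \<mu> \<nu> = Inf {(\<Sum>x\<in>V. \<Sum>y\<in>V. \<pi> x y * hdist H w x y) | \<pi>. coupling V \<mu> \<nu> \<pi>}"

definition mu :: "'a set \<Rightarrow> 'a set set \<Rightarrow> ('a set \<Rightarrow> real) \<Rightarrow> real \<Rightarrow> 'a \<Rightarrow> 'a \<Rightarrow> real" where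
  "mu V H w \<alpha> x z = (if z = x then \<alpha>
     else if z \<in> nbhd V H x then
       (1 - \<alpha>) * (\<Sum>h'\<in>{h'\<in>H. x \<in> h' \<and> z \<in> h'}. (1 / (real (card h') - 1)) * (w h' / Deg H w x))
     else 0)"

definition kappa_vert :: "'a set \<Rightarrow> 'a set set \<Rightarrow> ('a set \<Rightarrow> real) \<Rightarrow> real \<Rightarrow> 'a \<Rightarrow> 'a \<Rightarrow> real" where
  "kappa_vert V H w \<alpha> u v = 1 - Wass V H w (mu V H w \<alpha> u) (mu V H w \<alpha> v) / hdist H w u v"

text \<open>The sum over 1 \<le> i < j \<le> k is taken w.r.t. an enumeration of h increasing
in the linear order on vertices; this covers each unordered pair exactly once.\<close>
definition W_edge :: "'a::linorder set \<Rightarrow> 'a set set \<Rightarrow> ('a set \<Rightarrow> real) \<Rightarrow> real \<Rightarrow> 'a set \<Rightarrow> real" where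
  "W_edge V H w \<alpha> h = (\<Sum>(x, y)\<in>{(x, y). x \<in> h \<and> y \<in> h \<and> x < y}.
      Wass V H w (mu V H w \<alpha> x) (mu V H w \<alpha> y))"

definition kappa_edge :: "'a::linorder set \<Rightarrow> 'a set set \<Rightarrow> ('a set \<Rightarrow> real) \<Rightarrow> real \<Rightarrow> 'a set \<Rightarrow> real" where
  "kappa_edge V H w \<alpha> h = 1 - W_edge V H w \<alpha> h / Lh H w h"

end

theory Submission
  imports Defs
begin

text \<open>Both curvatures have the form \<open>1 - F(\<alpha>) / c\<close> with a constant \<open>c \<ge> 0\<close> and \<open>F\<close> a finite
sum of Wasserstein distances \<open>W(\<mu>\<^sub>x\<^sup>\<alpha>, \<mu>\<^sub>y\<^sup>\<alpha>)\<close>, so it suffices that each of these is convex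
in \<open>\<alpha>\<close>. The measure \<open>\<mu>\<^sub>x\<^sup>\<alpha>\<close> is affine in \<open>\<alpha>\<close>, and \<open>W\<close> is jointly convex in its two
arguments because mixing couplings gives a coupling of the mixed marginals whose
transport cost is the mixture of the costs.\<close>

definition transport_cost :: "'a set \<Rightarrow> 'a set set \<Rightarrow> ('a set \<Rightarrow> real) \<Rightarrow> ('a \<Rightarrow> 'a \<Rightarrow> real) \<Rightarrow> real"
  where "transport_cost V H w \<pi> = (\<Sum>x\<in>V. \<Sum>y\<in>V. \<pi> x y * hdist H w x y)"

lemma Wass_eq_Inf_transport_cost:
  "Wass V H w \<mu> \<nu> = Inf {transport_cost V H w \<pi> | \<pi>. coupling V \<mu> \<nu> \<pi>}"
  unfolding Wass_def transport_cost_def ..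

lemma transport_cost_nonneg:
  assumes "coupling V \<mu> \<nu> \<pi>" and "\<And>x y. x \<in> V \<Longrightarrow> y \<in> V \<Longrightarrow> hdist H w x y \<ge> 0"
  shows "transport_cost V H w \<pi> \<ge> 0"
  using assms unfolding transport_cost_def coupling_def by (auto intro!: sum_nonneg)

lemma Wass_le_transport_cost:
  assumes "coupling V \<mu> \<nu> \<pi>" and "\<And>x y. x \<in> V \<Longrightarrow> y \<in> V \<Longrightarrow> hdist H w x y \<ge> 0"
  shows "Wass V H w \<mu> \<nu> \<le> transport_cost V H w \<pi>"
  unfolding Wass_eq_Inf_transport_cost
proof (rule cInf_lower)
  show "bdd_below {transport_cost V H w \<pi> | \<pi>. coupling V \<mu> \<nu> \<pi>}"
    using transport_cost_nonneg[OF _ assms(2)] by (auto intro: bdd_belowI[of _ 0])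
qed (use assms(1) in blast)

lemma transport_cost_near_Wass:
  assumes "coupling V \<mu> \<nu> \<pi>" and "e > 0"
  obtains \<pi>' where "coupling V \<mu> \<nu> \<pi>'" and "transport_cost V H w \<pi>' < Wass V H w \<mu> \<nu> + e"
proof -
  have "Inf {transport_cost V H w \<pi> | \<pi>. coupling V \<mu> \<nu> \<pi>} < Wass V H w \<mu> \<nu> + e"
    using assms(2) by (simp add: Wass_eq_Inf_transport_cost)
  from cInf_lessD[OF _ this] show ?thesis
    using assms(1) that by blast
qed

lemma coupling_convex_combination:
  assumes "coupling V \<mu>\<^sub>1 \<nu>\<^sub>1 \<pi>\<^sub>1" and "coupling V \<mu>\<^sub>2 \<nu>\<^sub>2 \<pi>\<^sub>2" and "0 \<le> t" "t \<le> 1"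
  shows "coupling V (\<lambda>z. (1 - t) * \<mu>\<^sub>1 z + t * \<mu>\<^sub>2 z) (\<lambda>z. (1 - t) * \<nu>\<^sub>1 z + t * \<nu>\<^sub>2 z)
           (\<lambda>x y. (1 - t) * \<pi>\<^sub>1 x y + t * \<pi>\<^sub>2 x y)"
  using assms unfolding coupling_def by (simp add: sum.distrib flip: sum_distrib_left)

lemma transport_cost_convex_combination:
  "transport_cost V H w (\<lambda>x y. (1 - t) * \<pi>\<^sub>1 x y + t * \<pi>\<^sub>2 x y)
     = (1 - t) * transport_cost V H w \<pi>\<^sub>1 + t * transport_cost V H w \<pi>\<^sub>2"
  unfolding transport_cost_def by (simp add: distrib_right mult.assoc sum.distrib sum_distrib_left)

lemma Wass_convex_combination:
  assumes hdist_nonneg: "\<And>x y. x \<in> V \<Longrightarrow> y \<in> V \<Longrightarrow> hdist H w x y \<ge> 0"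
    and "coupling V \<mu>\<^sub>1 \<nu>\<^sub>1 \<pi>\<^sub>1" and "coupling V \<mu>\<^sub>2 \<nu>\<^sub>2 \<pi>\<^sub>2" and t: "0 \<le> t" "t \<le> 1"
  shows "Wass V H w (\<lambda>z. (1 - t) * \<mu>\<^sub>1 z + t * \<mu>\<^sub>2 z) (\<lambda>z. (1 - t) * \<nu>\<^sub>1 z + t * \<nu>\<^sub>2 z)
         \<le> (1 - t) * Wass V H w \<mu>\<^sub>1 \<nu>\<^sub>1 + t * Wass V H w \<mu>\<^sub>2 \<nu>\<^sub>2"
proof (rule field_le_epsilon)
  fix e :: real
  assume "e > 0"
  obtain \<rho>\<^sub>1 where \<rho>\<^sub>1: "coupling V \<mu>\<^sub>1 \<nu>\<^sub>1 \<rho>\<^sub>1" "transport_cost V H w \<rho>\<^sub>1 < Wass V H w \<mu>\<^sub>1 \<nu>\<^sub>1 + e"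
    using transport_cost_near_Wass[OF assms(2) \<open>e > 0\<close>] .
  obtain \<rho>\<^sub>2 where \<rho>\<^sub>2: "coupling V \<mu>\<^sub>2 \<nu>\<^sub>2 \<rho>\<^sub>2" "transport_cost V H w \<rho>\<^sub>2 < Wass V H w \<mu>\<^sub>2 \<nu>\<^sub>2 + e"
    using transport_cost_near_Wass[OF assms(3) \<open>e > 0\<close>] .
  have "Wass V H w (\<lambda>z. (1 - t) * \<mu>\<^sub>1 z + t * \<mu>\<^sub>2 z) (\<lambda>z. (1 - t) * \<nu>\<^sub>1 z + t * \<nu>\<^sub>2 z)
      \<le> transport_cost V H w (\<lambda>x y. (1 - t) * \<rho>\<^sub>1 x y + t * \<rho>\<^sub>2 x y)"
    by (intro Wass_le_transport_cost coupling_convex_combination \<rho>\<^sub>1(1) \<rho>\<^sub>2(1) t hdist_nonneg)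
  also have "\<dots> = (1 - t) * transport_cost V H w \<rho>\<^sub>1 + t * transport_cost V H w \<rho>\<^sub>2"
    by (rule transport_cost_convex_combination)
  also have "\<dots> \<le> (1 - t) * (Wass V H w \<mu>\<^sub>1 \<nu>\<^sub>1 + e) + t * (Wass V H w \<mu>\<^sub>2 \<nu>\<^sub>2 + e)"
    using \<rho>\<^sub>1(2) \<rho>\<^sub>2(2) t by (intro add_mono mult_left_mono) auto
  also have "\<dots> = (1 - t) * Wass V H w \<mu>\<^sub>1 \<nu>\<^sub>1 + t * Wass V H w \<mu>\<^sub>2 \<nu>\<^sub>2 + e"
    by (simp add: algebra_simps)
  finally show "Wass V H w (\<lambda>z. (1 - t) * \<mu>\<^sub>1 z + t * \<mu>\<^sub>2 z) (\<lambda>z. (1 - t) * \<nu>\<^sub>1 z + t * \<nu>\<^sub>2 z)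
      \<le> (1 - t) * Wass V H w \<mu>\<^sub>1 \<nu>\<^sub>1 + t * Wass V H w \<mu>\<^sub>2 \<nu>\<^sub>2 + e" .
qed

lemma product_coupling:
  assumes "\<forall>x\<in>V. \<mu> x \<ge> 0" "\<forall>y\<in>V. \<nu> y \<ge> 0" "(\<Sum>x\<in>V. \<mu> x) = 1" "(\<Sum>y\<in>V. \<nu> y) = 1"
  shows "coupling V \<mu> \<nu> (\<lambda>x y. \<mu> x * \<nu> y)"
  using assms unfolding coupling_def by (simp flip: sum_distrib_left sum_distrib_right)

lemma hdist_nonneg:
  assumes "hg_connected V H" and "\<forall>h\<in>H. w h > 0" and "x \<in> V" "y \<in> V"
  shows "hdist H w x y \<ge> 0"
proof (cases "x = y")
  case False
  then obtain p where "hyperpath H x y p"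
    using assms unfolding hg_connected_def by blast
  then have "Inf {sum_list (map w p) | p. hyperpath H x y p} \<ge> 0"
    using assms(2) unfolding hyperpath_def
    by (intro cInf_greatest) (auto intro!: sum_list_nonneg simp: less_imp_le subset_iff)
  with False show ?thesis
    by (simp add: hdist_def)
qed (simp add: hdist_def)

lemma Lh_nonneg:
  assumes "finite h" "card h \<ge> 2" and "\<And>x y. x \<in> h \<Longrightarrow> y \<in> h \<Longrightarrow> hdist H w x y \<ge> 0"
  shows "Lh H w h \<ge> 0"
proof -
  let ?D = "{hdist H w x y | x y. x \<in> h \<and> y \<in> h \<and> x \<noteq> y}"
  have "finite ?D"
    by (rule finite_subset[of _ "case_prod (hdist H w) ` (h \<times> h)"]) (use assms(1) in auto)
  moreover obtain x y where "x \<in> h" "y \<in> h" "x \<noteq> y"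
    using assms(1,2) card_le_Suc0_iff_eq[of h] by fastforce
  then have "?D \<noteq> {}" by blast
  ultimately have "Lh H w h \<in> ?D"
    unfolding Lh_def by (rule Min_in)
  then show ?thesis
    using assms(3) by auto
qed

lemma mu_affine:
  "mu V H w ((1 - t) * a + t * b) x = (\<lambda>z. (1 - t) * mu V H w a x z + t * mu V H w b x z)"
  unfolding mu_def by (auto simp: algebra_simps)

lemma Deg_pos:
  assumes "finite H" and "\<forall>h\<in>H. w h > 0" and "x \<in> \<Union>H"
  shows "Deg H w x > 0"
  unfolding Deg_def using assms by (intro sum_pos) auto

lemma sum_nbhd_incident_edges:
  assumes "finite V" and "\<forall>h\<in>H. h \<subseteq> V" and "finite H"
  shows "(\<Sum>z\<in>nbhd V H x. \<Sum>h\<in>{h\<in>H. x \<in> h \<and> z \<in> h}. f h)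
           = (\<Sum>h\<in>{h\<in>H. x \<in> h}. real (card h - 1) * f h)"
proof -
  let ?Hx = "{h\<in>H. x \<in> h}"
  have "(\<Sum>z\<in>nbhd V H x. \<Sum>h\<in>{h\<in>H. x \<in> h \<and> z \<in> h}. f h)
      = (\<Sum>z\<in>nbhd V H x. \<Sum>h\<in>?Hx. if z \<in> h then f h else 0)"
    using assms(3) by (auto simp: sum.inter_filter intro!: sum.cong)
  also have "\<dots> = (\<Sum>h\<in>?Hx. \<Sum>z\<in>nbhd V H x. if z \<in> h then f h else 0)"
    by (rule sum.swap)
  also have "\<dots> = (\<Sum>h\<in>?Hx. \<Sum>z\<in>h - {x}. f h)"
  proof (rule sum.cong[OF refl])
    fix h assume "h \<in> ?Hx"
    then have "{z \<in> nbhd V H x. z \<in> h} = h - {x}"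
      using assms(2) unfolding nbhd_def adjacent_def by auto
    moreover have "finite (nbhd V H x)"
      using assms(1) unfolding nbhd_def by simp
    ultimately show "(\<Sum>z\<in>nbhd V H x. if z \<in> h then f h else 0) = (\<Sum>z\<in>h - {x}. f h)"
      by (simp flip: sum.inter_filter)
  qed
  also have "\<dots> = (\<Sum>h\<in>?Hx. real (card h - 1) * f h)"
    using assms(1,2) by (intro sum.cong) (auto dest: finite_subset)
  finally show ?thesis .
qed

lemma mu_nonneg:
  assumes "\<forall>h\<in>H. card h \<ge> 2" and "\<forall>h\<in>H. w h > 0" and "0 \<le> \<alpha>" "\<alpha> \<le> 1"
  shows "mu V H w \<alpha> x z \<ge> 0"
  using assms unfolding mu_def Deg_def
  by (auto intro!: mult_nonneg_nonneg sum_nonneg divide_nonneg_nonneg simp: less_imp_le)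

lemma sum_mu_eq_1:
  assumes "finite V" and "finite H" and "\<forall>h\<in>H. h \<subseteq> V"
    and "\<forall>h\<in>H. card h \<ge> 2" and "\<forall>h\<in>H. w h > 0" and "x \<in> \<Union>H"
  shows "(\<Sum>z\<in>V. mu V H w \<alpha> x z) = 1"
proof -
  let ?Hx = "{h\<in>H. x \<in> h}"
  have xV: "x \<in> V" and nbhd: "nbhd V H x \<subseteq> V - {x}"
    using assms(3,6) unfolding nbhd_def adjacent_def by auto
  have "(\<Sum>z\<in>V - {x}. mu V H w \<alpha> x z)
      = (1 - \<alpha>) * (\<Sum>z\<in>nbhd V H x. \<Sum>h\<in>{h\<in>H. x \<in> h \<and> z \<in> h}.
                        1 / (real (card h) - 1) * (w h / Deg H w x))"
    using assms(1) nbhd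
    by (auto simp: mu_def sum_distrib_left if_distrib sum.If_cases Int_absorb1 cong: if_cong)
  also have "\<dots> = (1 - \<alpha>) * (\<Sum>h\<in>?Hx. w h / Deg H w x)"
    using assms(4) by (auto simp: sum_nbhd_incident_edges[OF assms(1,3,2)] of_nat_diff intro!: sum.cong)
  also have "\<dots> = 1 - \<alpha>"
    using Deg_pos[OF assms(2,5,6)] by (simp add: Deg_def flip: sum_divide_distrib)
  finally show ?thesis
    using assms(1) xV by (simp add: sum.remove mu_def)
qed

lemma mu_product_coupling:
  assumes "finite V" and "finite H" and "\<forall>h\<in>H. h \<subseteq> V"
    and "\<forall>h\<in>H. card h \<ge> 2" and "\<forall>h\<in>H. w h > 0"
    and "u \<in> \<Union>H" "v \<in> \<Union>H" and "\<alpha> \<in> {0..1}"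
  shows "coupling V (mu V H w \<alpha> u) (mu V H w \<alpha> v) (\<lambda>x y. mu V H w \<alpha> u x * mu V H w \<alpha> v y)"
  using assms by (intro product_coupling ballI mu_nonneg sum_mu_eq_1) auto

lemma convex_on_Wass_mu:
  assumes "finite V" and "finite H" and "\<forall>h\<in>H. h \<subseteq> V"
    and "\<forall>h\<in>H. card h \<ge> 2" and "\<forall>h\<in>H. w h > 0" and "hg_connected V H"
    and "u \<in> \<Union>H" "v \<in> \<Union>H"
  shows "convex_on {0..1} (\<lambda>\<alpha>. Wass V H w (mu V H w \<alpha> u) (mu V H w \<alpha> v))"
proof (rule convex_onI)
  fix t a b :: real
  assume "0 < t" "t < 1" and a: "a \<in> {0..1}" and b: "b \<in> {0..1}"
  note coupling = mu_product_coupling[OF assms(1-5,7,8)]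
  from \<open>0 < t\<close> \<open>t < 1\<close> show "Wass V H w (mu V H w ((1 - t) *\<^sub>R a + t *\<^sub>R b) u) (mu V H w ((1 - t) *\<^sub>R a + t *\<^sub>R b) v)
      \<le> (1 - t) * Wass V H w (mu V H w a u) (mu V H w a v) + t * Wass V H w (mu V H w b u) (mu V H w b v)"
    unfolding scaleR_conv_of_real of_real_eq_id id_apply mu_affine
    by (intro Wass_convex_combination[OF _ coupling[OF a] coupling[OF b]] hdist_nonneg[OF assms(6,5)]) auto
qed simp

lemma convex_on_sum_fun:
  assumes "finite I" and "convex S" and "\<And>i. i \<in> I \<Longrightarrow> convex_on S (f i)"
  shows "convex_on S (\<lambda>x. \<Sum>i\<in>I. f i x)"
  using assms(1,3)
proof (induction I rule: finite_induct)
  case empty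
  then show ?case using assms(2) by (simp add: convex_on_const)
next
  case (insert i I)
  then show ?case by (simp add: convex_on_add)
qed

lemma concave_on_one_minus_div:
  fixes c :: real
  assumes "convex_on S g" and "c \<ge> 0"
  shows "concave_on S (\<lambda>x. 1 - g x / c)"
  using assms
  by (intro concave_on_diff concave_on_const[THEN iffD2] convex_on_cdiv convex_on_imp_convex)

lemma convex_on_W_edge:
  assumes "finite V" and "finite H" and "\<forall>h\<in>H. h \<subseteq> V"
    and "\<forall>h\<in>H. card h \<ge> 2" and "\<forall>h\<in>H. w h > 0" and "hg_connected V H"
    and "h \<in> H"
  shows "convex_on {0..1} (\<lambda>\<alpha>. W_edge V H w \<alpha> h)"
proof -
  have "finite h"
    using assms(1,3,7) finite_subset by blast
  have "convex_on {0..1} (\<lambda>\<alpha>. Wass V H w (mu V H w \<alpha> x) (mu V H w \<alpha> y))"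
    if "x \<in> h" "y \<in> h" for x y
    using that assms(7) by (intro convex_on_Wass_mu assms(1-6)) auto
  then show ?thesis
    unfolding W_edge_def
    by (intro convex_on_sum_fun) (auto intro: finite_subset[of _ "h \<times> h"] simp: \<open>finite h\<close>)
qed

theorem mainTheorem1:
  fixes V :: "'a::linorder set" and H :: "'a set set" and w :: "'a set \<Rightarrow> real"
  assumes "finite V" and "finite H"
    and "\<forall>h\<in>H. h \<subseteq> V" and "\<forall>h\<in>H. card h \<ge> 2"
    and "\<forall>h\<in>H. w h > 0"
    and "hg_connected V H"
  shows "(\<forall>u\<in>V. \<forall>v\<in>V. u \<noteq> v \<longrightarrow> concave_on {0..1} (\<lambda>\<alpha>. kappa_vert V H w \<alpha> u v))
       \<and> (\<forall>h\<in>H. concave_on {0..1} (\<lambda>\<alpha>. kappa_edge V H w \<alpha> h))"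
proof (intro conjI ballI impI)
  fix u v
  assume "u \<in> V" "v \<in> V" "u \<noteq> v"
  then obtain p where "p \<noteq> []" "set p \<subseteq> H" "u \<in> hd p" "v \<in> last p"
    using assms(6) unfolding hg_connected_def hyperpath_def by blast
  then have "u \<in> \<Union>H" "v \<in> \<Union>H"
    using hd_in_set last_in_set by blast+
  then show "concave_on {0..1} (\<lambda>\<alpha>. kappa_vert V H w \<alpha> u v)"
    unfolding kappa_vert_def
    by (intro concave_on_one_minus_div convex_on_Wass_mu[OF assms]
        hdist_nonneg[OF assms(6,5) \<open>u \<in> V\<close> \<open>v \<in> V\<close>])
next
  fix h
  assume "h \<in> H"
  then have "h \<subseteq> V"
    using assms(3) by blast
  then have "Lh H w h \<ge> 0"
    using assms(1,4) \<open>h \<in> H\<close>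
    by (intro Lh_nonneg finite_subset[OF \<open>h \<subseteq> V\<close>] hdist_nonneg[OF assms(6,5)]) auto
  with \<open>h \<in> H\<close> show "concave_on {0..1} (\<lambda>\<alpha>. kappa_edge V H w \<alpha> h)"
    unfolding kappa_edge_def by (intro concave_on_one_minus_div convex_on_W_edge[OF assms])
qed

end
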